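(* Let $V$ be a set of interpretations over $A$. (1) For each ADF $D$ such that $\mathrm{mod}(D)=V$, there is a mod-characterization $f_D$ for $V$; (2) vice versa, for each mod-characterization $f:\mathcal{V}_2\to\mathcal{V}_2$ for $V$ we find $\mathrm{mod}(D_f)=V$.
   Context: Let $A$ be a fixed finite set of statements. An interpretation is a mapping $v:A\to\{\mathbf{t},\mathbf{f},\mathbf{u}\}$; $\mathcal{V}$ is the set of all interpretations and $\mathcal{V}_2$ the set of two-valued ones (never assigning $\mathbf{u}$). The information ordering is $\mathbf{u}<_i\mathbf{t}$, $\mathbf{u}<_i\mathbf{f}$, extended pointwise. For $v\in\mathcal{V}$, $[v]_2$ is the set of two-valued interpretations $w$ with $v\leq_i w$. An ADF is $D=(A,L,C)$ where each statement $a$ has an acceptance formula $\varphi_a$ over its parents. The operator $\Gamma_D$ maps $v$ to the interpretation assigning to each $a$ the greatest lower bound w.r.t. $\leq_i$ (consensus: $\mathbf{t}$ if all are $\mathbf{t}$, $\mathbf{f}$ if all are $\mathbf{f}$, otherwise $\mathbf{u}$) of $\{w(\varphi_a)\mid w\in[v]_2\}$. $v$ is a two-valued model of $D$ iff $v$ is two-valued and $\Gamma_D(v)=v$ (equivalently $v(a)=v(\varphi_a)$ for all $a$); $\mathrm{mod}(D)$ is the set of two-valued models. A function $f:\mathcal{V}_2\to\mathcal{V}_2$ is a mod-characterization of $V$ iff (1) $V\subseteq\mathcal{V}_2$ and (2) for each $v\in\mathcal{V}_2$, $v\in V$ iff $f(v)=v$. For $f:\mathcal{V}_2\to\mathcal{V}_2$,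 $D_f$ is the ADF whose acceptance formula for each $a$ is $\varphi^f_a=\bigvee_{w\in\mathcal{V}_2,\,f(w)(a)=\mathbf{t}}\phi_w$ with $\phi_w=\bigwedge_{w(a')=\mathbf{t}}a'\wedge\bigwedge_{w(a')=\mathbf{f}}\neg a'$. *)

theory Defs
  imports Main
begin

datatype tv = T | F | U

definition info_le :: "tv \<Rightarrow> tv \<Rightarrow> bool" where
  "info_le x y \<longleftrightarrow> x = U \<or> x = y"

definition info_le_interp :: "('a \<Rightarrow> tv) \<Rightarrow> ('a \<Rightarrow> tv) \<Rightarrow> bool" where
  "info_le_interp v w \<longleftrightarrow> (\<forall>a. info_le (v a) (w a))"

definition two_valued :: "('a \<Rightarrow> tv) set" where
  "two_valued = {v. \<forall>a. v a \<noteq> U}"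

definition completions :: "('a \<Rightarrow> tv) \<Rightarrow> ('a \<Rightarrow> tv) set" where
  "completions v = {w \<in> two_valued. info_le_interp v w}"

datatype 'a fm = Atom 'a | Neg "'a fm" | Conj "'a fm list" | Disj "'a fm list"

fun atoms :: "'a fm \<Rightarrow> 'a set" where
  "atoms (Atom a) = {a}"
| "atoms (Neg p) = atoms p"
| "atoms (Conj ps) = (\<Union>p\<in>set ps. atoms p)"
| "atoms (Disj ps) = (\<Union>p\<in>set ps. atoms p)"

fun holds :: "('a \<Rightarrow> tv) \<Rightarrow> 'a fm \<Rightarrow> bool" where
  "holds w (Atom a) = (w a = T)"
| "holds w (Neg p) = (\<not> holds w p)"
| "holds w (Conj ps) = (\<forall>p\<in>set ps. holds w p)"
| "holds w (Disj ps) = (\<exists>p\<in>set ps. holds w p)"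

definition eval_tv :: "('a \<Rightarrow> tv) \<Rightarrow> 'a fm \<Rightarrow> tv" where
  "eval_tv w p = (if holds w p then T else F)"

text \<open>Consensus (greatest lower bound w.r.t. info ordering) of a set of truth values.\<close>
definition consensus :: "tv set \<Rightarrow> tv" where
  "consensus S = (if S \<subseteq> {T} then T else if S \<subseteq> {F} then F else U)"

text \<open>ADF D = (A, L, C): statements are the elements of the finite type 'a,
  links L, and acceptance formulas.\<close>
record 'a adf =
  links :: "('a \<times> 'a) set"
  acc :: "'a \<Rightarrow> 'a fm"

definition wf_adf :: "'a adf \<Rightarrow> bool" where
  "wf_adf D \<longleftrightarrow> (\<forall>a. atoms (acc D a) \<subseteq> {b. (b, a) \<in> links D})"

definition Gamma :: "'a adf \<Rightarrow> ('a \<Rightarrow> tv) \<Rightarrow> ('a \<Rightarrow> tv)" where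
  "Gamma D v = (\<lambda>a. consensus {eval_tv w (acc D a) | w. w \<in> completions v})"

definition models :: "'a adf \<Rightarrow> ('a \<Rightarrow> tv) set" where
  "models D = {v \<in> two_valued. Gamma D v = v}"

text \<open>Mod-characterization; f is a function from two-valued to two-valued
  interpretations (only its behaviour on two_valued matters).\<close>
definition mod_char :: "(('a \<Rightarrow> tv) \<Rightarrow> ('a \<Rightarrow> tv)) \<Rightarrow> ('a \<Rightarrow> tv) set \<Rightarrow> bool" where
  "mod_char f V \<longleftrightarrow> (\<forall>v\<in>two_valued. f v \<in> two_valued) \<and> V \<subseteq> two_valued \<and>
     (\<forall>v\<in>two_valued. v \<in> V \<longleftrightarrow> f v = v)"

definition list_of :: "'b set \<Rightarrow> 'b list" where
  "list_of S = (SOME xs. set xs = S \<and> distinct xs)"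

definition phi_w :: "('a::finite \<Rightarrow> tv) \<Rightarrow> 'a fm" where
  "phi_w w = Conj (map (\<lambda>a. Atom a) (list_of {a. w a = T}) @
                   map (\<lambda>a. Neg (Atom a)) (list_of {a. w a = F}))"

definition D_f :: "(('a::finite \<Rightarrow> tv) \<Rightarrow> ('a \<Rightarrow> tv)) \<Rightarrow> 'a adf" where
  "D_f f = \<lparr> links = UNIV, acc = (\<lambda>a. Disj (map phi_w (list_of {w \<in> two_valued. f w a = T}))) \<rparr>"

end

theory Submission
  imports Defs
begin

text \<open>On a two-valued interpretation the characteristic operator reduces to evaluating the
  acceptance formulas, so Gamma D restricted to two-valued interpretations is itself a
  mod-characterization of mod(D). Conversely, the disjunction of the minterms phi_w with
  f(w)(a) = t holds at a two-valued v exactly when f(v)(a) = t; hence Gamma (D_f f)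
  coincides with f on two-valued interpretations, and both have the same fixpoints.\<close>

lemma set_list_of: "finite S \<Longrightarrow> set (list_of S) = S"
  unfolding list_of_def by (rule someI2_ex[OF finite_distinct_list]) auto

instance tv :: finite
proof
  have "(UNIV :: tv set) = {T, F, U}"
    using tv.exhaust by auto
  then show "finite (UNIV :: tv set)" by (metis finite.emptyI finite_insert)
qed

lemma completions_two_valued: "v \<in> two_valued \<Longrightarrow> completions v = {v}"
  unfolding completions_def two_valued_def info_le_interp_def info_le_def
  by (auto intro: ext)

lemma Gamma_two_valued:
  "v \<in> two_valued \<Longrightarrow> Gamma D v = (\<lambda>a. eval_tv v (acc D a))"
  unfolding Gamma_def by (auto simp: completions_two_valued consensus_def eval_tv_def)

lemma Gamma_in_two_valued: "v \<in> two_valued \<Longrightarrow> Gamma D v \<in> two_valued"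
  by (simp add: Gamma_two_valued two_valued_def eval_tv_def)

lemma mod_char_Gamma: "mod_char (Gamma D) (models D)"
  by (auto simp: mod_char_def models_def Gamma_in_two_valued)

lemma holds_phi_w_iff:
  fixes v w :: "'a::finite \<Rightarrow> tv"
  assumes "v \<in> two_valued" and "w \<in> two_valued"
  shows "holds v (phi_w w) \<longleftrightarrow> v = w"
proof -
  have "holds v (phi_w w) \<longleftrightarrow> (\<forall>a. w a = T \<longrightarrow> v a = T) \<and> (\<forall>a. w a = F \<longrightarrow> v a \<noteq> T)"
    by (auto simp: phi_w_def set_list_of) force+
  also have "\<dots> \<longleftrightarrow> v = w"
    using assms unfolding two_valued_def by (auto intro!: ext) (metis tv.exhaust)+
  finally show ?thesis .
qed

lemma holds_acc_D_f_iff: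
  fixes f :: "('a::finite \<Rightarrow> tv) \<Rightarrow> ('a \<Rightarrow> tv)"
  assumes "v \<in> two_valued"
  shows "holds v (acc (D_f f) a) \<longleftrightarrow> f v a = T"
proof -
  have "holds v (acc (D_f f) a) \<longleftrightarrow> (\<exists>w\<in>two_valued. f w a = T \<and> holds v (phi_w w))"
    by (auto simp: D_f_def set_list_of)
  also have "\<dots> \<longleftrightarrow> f v a = T"
    using assms holds_phi_w_iff[OF assms] by auto
  finally show ?thesis .
qed

lemma Gamma_D_f:
  fixes f :: "('a::finite \<Rightarrow> tv) \<Rightarrow> ('a \<Rightarrow> tv)"
  assumes "v \<in> two_valued" and "f v \<in> two_valued"
  shows "Gamma (D_f f) v = f v"
proof
  fix a
  show "Gamma (D_f f) v a = f v a"
    using assms holds_acc_D_f_iff[OF assms(1), of f a]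
    by (cases "f v a") (auto simp: Gamma_two_valued eval_tv_def two_valued_def)
qed

lemma models_D_f:
  fixes f :: "('a::finite \<Rightarrow> tv) \<Rightarrow> ('a \<Rightarrow> tv)"
  assumes "mod_char f V"
  shows "models (D_f f) = V"
  using assms Gamma_D_f by (auto simp: models_def mod_char_def)

theorem proposition4:
  fixes V :: "('a::finite \<Rightarrow> tv) set"
  shows "(\<forall>D :: 'a adf. wf_adf D \<and> models D = V \<longrightarrow> (\<exists>f. mod_char f V))
       \<and> (\<forall>f. mod_char f V \<longrightarrow> models (D_f f) = V)"
  using mod_char_Gamma models_D_f by blast

end
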